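(* Let $\mathbf a=(a_1,\ldots,a_n)\in\mathbb Z_{\geq1}^n$ and $\mathbf b=(b_1,\ldots,b_m)\in\mathbb Z_{\geq1}^m$. Every minimal solution $(\mathbf x,\mathbf y)$ of $x_1a_1+\cdots+x_na_n=y_1b_1+\cdots+y_mb_m$ is a convex combination of $\mathbf 0\in\mathbb R^{n+m}$ and the generators $\mathbf g_{i,j}$ ($1\leq i\leq n$, $1\leq j\leq m$). Moreover, one can use at most $m+n-1$ nonzero generators in any such combination (i.e., there is such a convex combination in which at most $m+n-1$ generators have nonzero coefficient).
   Context: A solution is a pair $(\mathbf x,\mathbf y)\in\mathbb Z_{\geq0}^n\times\mathbb Z_{\geq0}^m$ with $\sum_i x_ia_i=\sum_j y_jb_j$; it is minimal if it is nonzero and cannot be written as the sum of two nonzero solutions. Let $\mathbf e_k$ be the $k$th standard unit vector of $\mathbb R^{n+m}$. For $1\leq i\leq n$, $1\leq j\leq m$, the generator $\mathbf g_{i,j}=b_j\mathbf e_i+a_i\mathbf e_{n+j}$ is the solution whose only nonzero coordinates are $x_i=b_j$ and $y_j=a_i$. *)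

theory Defs
  imports Complex_Main
begin

text \<open>Tuples are functions nat => _ indexed by 0..<n (resp. 0..<m); entries outside
  the index range are required to be zero for solutions.\<close>

definition is_solution :: "nat \<Rightarrow> nat \<Rightarrow> (nat \<Rightarrow> nat) \<Rightarrow> (nat \<Rightarrow> nat)
    \<Rightarrow> (nat \<Rightarrow> nat) \<Rightarrow> (nat \<Rightarrow> nat) \<Rightarrow> bool" where
  "is_solution n m a b x y \<longleftrightarrow>
     (\<forall>i\<ge>n. x i = 0) \<and> (\<forall>j\<ge>m. y j = 0) \<and>
     (\<Sum>i<n. x i * a i) = (\<Sum>j<m. y j * b j)"

definition nonzero_sol :: "nat \<Rightarrow> nat \<Rightarrow> (nat \<Rightarrow> nat) \<Rightarrow> (nat \<Rightarrow> nat) \<Rightarrow> bool" where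
  "nonzero_sol n m x y \<longleftrightarrow> (\<exists>i<n. x i \<noteq> 0) \<or> (\<exists>j<m. y j \<noteq> 0)"

definition minimal_solution :: "nat \<Rightarrow> nat \<Rightarrow> (nat \<Rightarrow> nat) \<Rightarrow> (nat \<Rightarrow> nat)
    \<Rightarrow> (nat \<Rightarrow> nat) \<Rightarrow> (nat \<Rightarrow> nat) \<Rightarrow> bool" where
  "minimal_solution n m a b x y \<longleftrightarrow>
     is_solution n m a b x y \<and> nonzero_sol n m x y \<and>
     \<not> (\<exists>x1 y1 x2 y2. is_solution n m a b x1 y1 \<and> nonzero_sol n m x1 y1 \<and>
          is_solution n m a b x2 y2 \<and> nonzero_sol n m x2 y2 \<and>
          x = (\<lambda>i. x1 i + x2 i) \<and> y = (\<lambda>j. y1 j + y2 j))"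

definition vec_of :: "nat \<Rightarrow> (nat \<Rightarrow> nat) \<Rightarrow> (nat \<Rightarrow> nat) \<Rightarrow> nat \<Rightarrow> real" where
  "vec_of n x y k = (if k < n then real (x k) else real (y (k - n)))"

text \<open>Generator g_{i,j} = b_j e_i + a_i e_{n+j} (0-based indices).\<close>

definition gen :: "nat \<Rightarrow> (nat \<Rightarrow> nat) \<Rightarrow> (nat \<Rightarrow> nat) \<Rightarrow> nat \<Rightarrow> nat \<Rightarrow> nat \<Rightarrow> real" where
  "gen n a b i j k = (if k = i then real (b j) else if k = n + j then real (a i) else 0)"

end

theory Submission
  imports Defs "HOL-Library.Function_Algebras"
begin

text \<open>
  Let S be the common value of both sides at the minimal solution (x, y). Then
  (x, y) = sum_{i,j} (x_i y_j / S) g_{i,j}, with coefficient sum (sum_i x_i)(sum_j y_j) / S,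
  and this is at most 1: list the a-weights occurring in x as a sequence of length sum_i x_i and
  the b-weights occurring in y as one of length sum_j y_j; the differences P_k - Q_l of prefix
  sums are pairwise distinct modulo S, since a coincidence yields two cyclic intervals of equal
  weight, i.e. a proper subsolution. All g_{i,j} lie in the span of the n + m - 1 generators
  g_{i,0} and g_{0,j}, so a conic Caratheodory argument shrinks the support to at most n + m - 1
  generators without increasing the coefficient sum; the remaining weight goes to 0.
\<close>

lemma cyclic_interval_prefix_sum:
  fixes w :: "nat \<Rightarrow> nat"
  assumes "i < N" "j < N"
  obtains I where "I \<subseteq> {..<N}" "j \<notin> I" "I = {} \<Longrightarrow> i = j"
    "int (sum w {..<N}) dvd int (sum w I) - (int (sum w {..<j}) - int (sum w {..<i}))"
proof (cases "i \<le> j")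
  case True
  have "sum w {..<j} = sum w {..<i} + sum w {i..<j}"
    using True by (metis atLeast0LessThan sum.atLeastLessThan_concat zero_le)
  with True assms show ?thesis
    by (intro that[of "{i..<j}"]) auto
next
  case False
  let ?I = "{..<N} - {j..<i}"
  have "sum w {..<i} = sum w {..<j} + sum w {j..<i}"
    using False by (metis atLeast0LessThan nat_le_linear sum.atLeastLessThan_concat zero_le)
  moreover have "sum w ?I = sum w {..<N} - sum w {j..<i}"
    using assms by (intro sum_diff_nat) auto
  moreover have "sum w {j..<i} \<le> sum w {..<N}"
    using assms by (intro sum_mono2) auto
  ultimately have "int (sum w ?I) - (int (sum w {..<j}) - int (sum w {..<i})) = int (sum w {..<N})"
    by simp
  with False assms show ?thesis
    by (intro that[of ?I]) auto
qed

lemma prefix_sum_differences_inj_mod: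
  fixes \<alpha> \<beta> :: "nat \<Rightarrow> nat"
  assumes \<alpha>_pos: "\<forall>k<X. \<alpha> k \<ge> 1" and \<beta>_pos: "\<forall>l<Y. \<beta> l \<ge> 1"
    and total: "sum \<alpha> {..<X} = sum \<beta> {..<Y}"
    and unbalanced: "\<And>A B. A \<subset> {..<X} \<Longrightarrow> B \<subseteq> {..<Y} \<Longrightarrow> A \<noteq> {} \<or> B \<noteq> {} \<Longrightarrow>
      sum \<alpha> A \<noteq> sum \<beta> B"
  shows "inj_on (\<lambda>(k, l). (int (sum \<alpha> {..<k}) - int (sum \<beta> {..<l})) mod int (sum \<alpha> {..<X}))
    ({..<X} \<times> {..<Y})"
proof (rule inj_onI, clarify)
  define S where "S = sum \<alpha> {..<X}"
  fix k l k' l'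
  assume k: "k < X" "k' < X" and l: "l < Y" "l' < Y"
    and "(int (sum \<alpha> {..<k}) - int (sum \<beta> {..<l})) mod int (sum \<alpha> {..<X})
      = (int (sum \<alpha> {..<k'}) - int (sum \<beta> {..<l'})) mod int (sum \<alpha> {..<X})"
  then have "int S dvd (int (sum \<alpha> {..<k}) - int (sum \<beta> {..<l}))
      - (int (sum \<alpha> {..<k'}) - int (sum \<beta> {..<l'}))"
    unfolding S_def by (simp add: mod_eq_dvd_iff)
  moreover obtain A where A: "A \<subseteq> {..<X}" "k' \<notin> A" "A = {} \<Longrightarrow> k = k'"
    "int S dvd int (sum \<alpha> A) - (int (sum \<alpha> {..<k'}) - int (sum \<alpha> {..<k}))"
    using cyclic_interval_prefix_sum[OF k] unfolding S_def by blast
  moreover obtain B where B: "B \<subseteq> {..<Y}" "l' \<notin> B" "B = {} \<Longrightarrow> l = l'"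
    "int S dvd int (sum \<beta> B) - (int (sum \<beta> {..<l'}) - int (sum \<beta> {..<l}))"
    using cyclic_interval_prefix_sum[OF l] unfolding S_def total by blast
  moreover have "int (sum \<alpha> A) - int (sum \<beta> B)
      = (int (sum \<alpha> A) - (int (sum \<alpha> {..<k'}) - int (sum \<alpha> {..<k})))
      - (int (sum \<beta> B) - (int (sum \<beta> {..<l'}) - int (sum \<beta> {..<l})))
      - ((int (sum \<alpha> {..<k}) - int (sum \<beta> {..<l})) - (int (sum \<alpha> {..<k'}) - int (sum \<beta> {..<l'})))"
    by simp
  ultimately have "int S dvd int (sum \<alpha> A) - int (sum \<beta> B)"
    by (metis dvd_diff)
  moreover have "sum \<alpha> A < S"
    using A k \<alpha>_pos unfolding S_def by (intro sum_strict_mono2) auto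
  moreover have "sum \<beta> B < S"
    using B l \<beta>_pos unfolding S_def total by (intro sum_strict_mono2) auto
  ultimately have "sum \<alpha> A = sum \<beta> B"
    by (metis mod_eq_dvd_iff of_nat_mod of_nat_eq_iff mod_less)
  moreover have "A \<subset> {..<X}"
    using A k by auto
  ultimately show "k = k' \<and> l = l'"
    using unbalanced[of A B] A B by blast
qed

lemma card_product_le_if_no_balanced_subpair:
  fixes \<alpha> \<beta> :: "nat \<Rightarrow> nat"
  assumes \<alpha>_pos: "\<forall>k<X. \<alpha> k \<ge> 1" and "\<forall>l<Y. \<beta> l \<ge> 1"
    and "sum \<alpha> {..<X} = sum \<beta> {..<Y}"
    and "\<And>A B. A \<subset> {..<X} \<Longrightarrow> B \<subseteq> {..<Y} \<Longrightarrow> A \<noteq> {} \<or> B \<noteq> {} \<Longrightarrow>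
      sum \<alpha> A \<noteq> sum \<beta> B"
  shows "X * Y \<le> sum \<alpha> {..<X}"
proof (cases "X = 0")
  case True
  then show ?thesis
    by simp
next
  case False
  define S where "S = sum \<alpha> {..<X}"
  have "0 < S"
    using False \<alpha>_pos member_le_sum[of 0 "{..<X}" \<alpha>] unfolding S_def by fastforce
  let ?f = "\<lambda>(k, l). (int (sum \<alpha> {..<k}) - int (sum \<beta> {..<l})) mod int S"
  have "?f ` ({..<X} \<times> {..<Y}) \<subseteq> {0..<int S}"
    using \<open>0 < S\<close> by auto
  then have "card ({..<X} \<times> {..<Y}) \<le> card {0..<int S}"
    using prefix_sum_differences_inj_mod[OF assms] unfolding S_def by (intro card_inj_on_le) auto
  then have "X * Y \<le> S"
    by (simp add: card_cartesian_product)
  then show ?thesis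
    unfolding S_def .
qed

definition fiber_card :: "('a \<Rightarrow> 'b) \<Rightarrow> 'a set \<Rightarrow> 'b \<Rightarrow> nat" where
  "fiber_card \<sigma> A i = card {k \<in> A. \<sigma> k = i}"

lemma fiber_card_eq_0_iff:
  "finite A \<Longrightarrow> fiber_card \<sigma> A i = 0 \<longleftrightarrow> i \<notin> \<sigma> ` A"
  unfolding fiber_card_def by auto

lemma fiber_card_Un:
  "finite A \<Longrightarrow> finite B \<Longrightarrow> A \<inter> B = {} \<Longrightarrow>
    fiber_card \<sigma> (A \<union> B) i = fiber_card \<sigma> A i + fiber_card \<sigma> B i"
  unfolding fiber_card_def
  by (subst card_Un_disjoint[symmetric]) (auto intro: arg_cong[where f = card])

lemma sum_comp_eq_sum_fiber_card:
  assumes "finite A" "finite T" "\<sigma> ` A \<subseteq> T"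
  shows "(\<Sum>k\<in>A. w (\<sigma> k)) = (\<Sum>i\<in>T. fiber_card \<sigma> A i * w i)"
proof -
  have "(\<Sum>k\<in>A. w (\<sigma> k)) = (\<Sum>i\<in>T. \<Sum>k\<in>{k \<in> A. \<sigma> k = i}. w (\<sigma> k))"
    by (rule sum.group[OF assms, symmetric])
  also have "\<dots> = (\<Sum>i\<in>T. fiber_card \<sigma> A i * w i)"
    unfolding fiber_card_def by (intro sum.cong) auto
  finally show ?thesis .
qed

lemma exists_enumeration:
  fixes x :: "nat \<Rightarrow> nat"
  assumes "\<forall>i\<ge>n. x i = 0"
  obtains \<sigma> where "\<sigma> ` {..<sum x {..<n}} \<subseteq> {..<n}" "fiber_card \<sigma> {..<sum x {..<n}} = x"
proof -
  define L where "L = concat (map (\<lambda>i. replicate (x i) i) [0..<n])"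
  have "length L = sum x {..<n}"
    by (simp add: L_def length_concat comp_def lessThan_atLeast0
        flip: sum_set_upt_conv_sum_list_nat)
  moreover have "set L \<subseteq> {..<n}"
    by (auto simp: L_def)
  moreover have "fiber_card (nth L) {..<length L} = x"
  proof
    fix i
    have "fiber_card (nth L) {..<length L} i = length (filter ((=) i) L)"
      by (simp add: fiber_card_def length_filter_conv_card eq_commute)
    also have "\<dots> = (if i < n then x i else 0)"
      unfolding L_def by (induction n) (auto simp: less_Suc_eq)
    also have "\<dots> = x i"
      using assms by simp
    finally show "fiber_card (nth L) {..<length L} i = x i" .
  qed
  ultimately show ?thesis
    by (intro that[of "nth L"]) (auto simp: set_conv_nth)
qed

lemma is_solution_fiber_card_iff:
  assumes "finite A" "\<sigma> ` A \<subseteq> {..<n}" "finite B" "\<tau> ` B \<subseteq> {..<m}"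
  shows "is_solution n m a b (fiber_card \<sigma> A) (fiber_card \<tau> B) \<longleftrightarrow>
    (\<Sum>k\<in>A. a (\<sigma> k)) = (\<Sum>l\<in>B. b (\<tau> l))"
  using assms
  by (auto simp: is_solution_def fiber_card_eq_0_iff sum_comp_eq_sum_fiber_card[of _ "{..<n}"]
      sum_comp_eq_sum_fiber_card[of _ "{..<m}"])

lemma nonzero_sol_fiber_card_iff:
  assumes "finite A" "\<sigma> ` A \<subseteq> {..<n}" "finite B" "\<tau> ` B \<subseteq> {..<m}"
  shows "nonzero_sol n m (fiber_card \<sigma> A) (fiber_card \<tau> B) \<longleftrightarrow> A \<noteq> {} \<or> B \<noteq> {}"
  using assms by (auto simp: nonzero_sol_def fiber_card_eq_0_iff; blast)

lemma minimal_solution_unbalanced: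
  fixes X Y :: nat
  assumes min: "minimal_solution n m a b x y"
    and \<sigma>: "\<sigma> ` {..<X} \<subseteq> {..<n}" "fiber_card \<sigma> {..<X} = x"
    and \<tau>: "\<tau> ` {..<Y} \<subseteq> {..<m}" "fiber_card \<tau> {..<Y} = y"
    and A: "A \<subset> {..<X}" and B: "B \<subseteq> {..<Y}" and nonempty: "A \<noteq> {} \<or> B \<noteq> {}"
  shows "(\<Sum>k\<in>A. a (\<sigma> k)) \<noteq> (\<Sum>l\<in>B. b (\<tau> l))"
proof
  assume balanced: "(\<Sum>k\<in>A. a (\<sigma> k)) = (\<Sum>l\<in>B. b (\<tau> l))"
  have A_sub: "A \<subseteq> {..<X}"
    using A by blast
  define A' where "A' = {..<X} - A"
  define B' where "B' = {..<Y} - B"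
  have fin: "finite A" "finite A'" "finite B" "finite B'"
    using finite_subset[OF A_sub] finite_subset[OF B] by (simp_all add: A'_def B'_def)
  have ranges: "\<sigma> ` A \<subseteq> {..<n}" "\<sigma> ` A' \<subseteq> {..<n}" "\<tau> ` B \<subseteq> {..<m}" "\<tau> ` B' \<subseteq> {..<m}"
    using A_sub B \<sigma>(1) \<tau>(1) unfolding A'_def B'_def by blast+
  have "(\<Sum>k<X. a (\<sigma> k)) = (\<Sum>l<Y. b (\<tau> l))"
    using min \<sigma> \<tau> is_solution_fiber_card_iff[of "{..<X}" \<sigma> n "{..<Y}" \<tau> m a b]
    unfolding minimal_solution_def by simp
  then have "(\<Sum>k\<in>A'. a (\<sigma> k)) = (\<Sum>l\<in>B'. b (\<tau> l))"
    using A B balanced fin(1,3) by (simp add: A'_def B'_def sum_diff_nat psubset_imp_subset)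
  then have "is_solution n m a b (fiber_card \<sigma> A) (fiber_card \<tau> B)"
    and "is_solution n m a b (fiber_card \<sigma> A') (fiber_card \<tau> B')"
    using balanced fin ranges by (simp_all add: is_solution_fiber_card_iff)
  moreover have "nonzero_sol n m (fiber_card \<sigma> A) (fiber_card \<tau> B)"
    and "nonzero_sol n m (fiber_card \<sigma> A') (fiber_card \<tau> B')"
    using nonempty A fin ranges unfolding A'_def by (auto simp: nonzero_sol_fiber_card_iff)
  moreover have "x = (\<lambda>i. fiber_card \<sigma> A i + fiber_card \<sigma> A' i)"
    and "y = (\<lambda>j. fiber_card \<tau> B j + fiber_card \<tau> B' j)"
    using A B fin \<sigma>(2) \<tau>(2) unfolding A'_def B'_def
    by (auto simp: fiber_card_Un[symmetric] Un_absorb1 psubset_imp_subset)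
  ultimately show False
    using min unfolding minimal_solution_def by blast
qed

lemma minimal_solution_sum_mult_sum_le:
  assumes a_pos: "\<forall>i<n. a i \<ge> 1" and b_pos: "\<forall>j<m. b j \<ge> 1"
    and min: "minimal_solution n m a b x y"
  shows "(\<Sum>i<n. x i) * (\<Sum>j<m. y j) \<le> (\<Sum>i<n. x i * a i)"
proof -
  have sol: "is_solution n m a b x y"
    using min unfolding minimal_solution_def by simp
  obtain \<sigma> where \<sigma>: "\<sigma> ` {..<sum x {..<n}} \<subseteq> {..<n}" "fiber_card \<sigma> {..<sum x {..<n}} = x"
    using exists_enumeration[of n x] sol unfolding is_solution_def by blast
  obtain \<tau> where \<tau>: "\<tau> ` {..<sum y {..<m}} \<subseteq> {..<m}" "fiber_card \<tau> {..<sum y {..<m}} = y"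
    using exists_enumeration[of m y] sol unfolding is_solution_def by blast
  have "(\<Sum>k<sum x {..<n}. a (\<sigma> k)) = (\<Sum>i<n. x i * a i)"
    using \<sigma> by (simp add: sum_comp_eq_sum_fiber_card[of _ "{..<n}"])
  moreover have "(\<Sum>l<sum y {..<m}. b (\<tau> l)) = (\<Sum>j<m. y j * b j)"
    using \<tau> by (simp add: sum_comp_eq_sum_fiber_card[of _ "{..<m}"])
  moreover have "sum x {..<n} * sum y {..<m} \<le> (\<Sum>k<sum x {..<n}. a (\<sigma> k))"
  proof (rule card_product_le_if_no_balanced_subpair)
    show "\<forall>k<sum x {..<n}. a (\<sigma> k) \<ge> 1" "\<forall>l<sum y {..<m}. b (\<tau> l) \<ge> 1"
      using \<sigma> \<tau> a_pos b_pos by auto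
    show "(\<Sum>k<sum x {..<n}. a (\<sigma> k)) = (\<Sum>l<sum y {..<m}. b (\<tau> l))"
      using sol \<sigma> \<tau> unfolding is_solution_def
      by (simp add: sum_comp_eq_sum_fiber_card[of _ "{..<n}"] sum_comp_eq_sum_fiber_card[of _ "{..<m}"])
    show "(\<Sum>k\<in>A. a (\<sigma> k)) \<noteq> (\<Sum>l\<in>B. b (\<tau> l))"
      if "A \<subset> {..<sum x {..<n}}" "B \<subseteq> {..<sum y {..<m}}" "A \<noteq> {} \<or> B \<noteq> {}" for A B
      using minimal_solution_unbalanced[OF min \<sigma> \<tau> that] .
  qed
  ultimately show ?thesis
    by simp
qed


context vector_space
begin

lemma exists_nontrivial_relation:
  assumes "finite D" "finite W" "G ` D \<subseteq> span W" "card W < card D"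
  shows "\<exists>d. (\<exists>e\<in>D. d e \<noteq> 0) \<and> (\<Sum>e\<in>D. d e *s G e) = 0"
proof (cases "inj_on G D")
  case True
  have "dependent (G ` D)"
  proof (rule ccontr)
    assume "independent (G ` D)"
    then have "card (G ` D) \<le> card W"
      using independent_span_bound[OF assms(2) _ assms(3)] by blast
    then have "card D \<le> card W"
      using card_image[OF True] by simp
    with assms(4) show False
      by simp
  qed
  then obtain u where u: "\<exists>v\<in>G ` D. u v \<noteq> 0" "(\<Sum>v\<in>G ` D. u v *s v) = 0"
    unfolding dependent_finite[OF finite_imageI[OF assms(1)]] by blast
  have "(\<Sum>e\<in>D. u (G e) *s G e) = (\<Sum>v\<in>G ` D. u v *s v)"
    using sum.reindex[OF True, of "\<lambda>v. u v *s v"] by simp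
  moreover have "\<exists>e\<in>D. u (G e) \<noteq> 0"
    using u(1) by blast
  ultimately show ?thesis
    using u(2) by (intro exI[of _ "u \<circ> G"]) simp
next
  case False
  then obtain e e' where e: "e \<in> D" "e' \<in> D" "e \<noteq> e'" "G e = G e'"
    by (auto simp: inj_on_def)
  define d :: "_ \<Rightarrow> 'a" where "d i = (if i = e then 1 else if i = e' then -1 else 0)" for i
  have "(\<Sum>i\<in>D. d i *s G i) = (\<Sum>i\<in>{e, e'}. d i *s G i)"
    using e assms(1) by (intro sum.mono_neutral_right) (auto simp: d_def)
  also have "\<dots> = 0"
    using e by (simp add: d_def)
  finally show ?thesis
    using e by (intro exI[of _ d]) (auto simp: d_def)
qed

end

lemma exists_largest_feasible_step:
  fixes c d :: "'e \<Rightarrow> 'a::linordered_field"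
  assumes "finite D" "\<exists>e\<in>D. 0 < d e" "\<forall>e\<in>D. 0 \<le> c e"
  obtains t where "0 \<le> t" "\<forall>e\<in>D. t * d e \<le> c e" "\<exists>e\<in>D. t * d e = c e"
proof -
  define N where "N = {e\<in>D. 0 < d e}"
  have N: "finite N" "N \<noteq> {}"
    using assms(1,2) unfolding N_def by auto
  then have "Min ((\<lambda>e. c e / d e) ` N) \<in> (\<lambda>e. c e / d e) ` N"
    by (intro Min_in) auto
  then obtain e0 where e0: "e0 \<in> N" "c e0 / d e0 = Min ((\<lambda>e. c e / d e) ` N)"
    by auto
  show ?thesis
  proof
    show "0 \<le> c e0 / d e0"
      using e0(1) assms(3) unfolding N_def by simp
    show "\<forall>e\<in>D. c e0 / d e0 * d e \<le> c e"
    proof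
      fix e assume "e \<in> D"
      show "c e0 / d e0 * d e \<le> c e"
      proof (cases "0 < d e")
        case True
        then have "c e0 / d e0 \<le> c e / d e"
          using N \<open>e \<in> D\<close> unfolding e0(2) N_def by simp
        with True show ?thesis
          by (simp add: pos_le_divide_eq)
      next
        case False
        then have "d e \<le> 0"
          by simp
        with \<open>0 \<le> c e0 / d e0\<close> have "c e0 / d e0 * d e \<le> 0"
          by (rule mult_nonneg_nonpos)
        with assms(3) \<open>e \<in> D\<close> show ?thesis
          by force
      qed
    qed
    show "\<exists>e\<in>D. c e0 / d e0 * d e = c e"
      using e0(1) unfolding N_def by force
  qed
qed

locale linordered_vector_space = vector_space scale
  for scale :: "'a::linordered_field \<Rightarrow> 'b::ab_group_add \<Rightarrow> 'b" (infixr \<open>*s\<close> 75)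
begin

lemma exists_relation_with_positive_entry:
  assumes "finite D" "finite W" "G ` D \<subseteq> span W" "card W < card D"
  obtains d where "\<exists>e\<in>D. 0 < d e" "0 \<le> sum d D" "(\<Sum>e\<in>D. d e *s G e) = 0"
proof -
  obtain d0 where d0: "\<exists>e\<in>D. d0 e \<noteq> 0" "(\<Sum>e\<in>D. d0 e *s G e) = 0"
    using exists_nontrivial_relation[OF assms] by blast
  define d where "d = (if 0 \<le> sum d0 D then d0 else (\<lambda>e. - d0 e))"
  have d: "\<exists>e\<in>D. d e \<noteq> 0" "0 \<le> sum d D" "(\<Sum>e\<in>D. d e *s G e) = 0"
    using d0 by (auto simp: d_def sum_negf)
  have "\<exists>e\<in>D. 0 < d e"
  proof (rule ccontr)
    assume "\<not> (\<exists>e\<in>D. 0 < d e)"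
    then have "\<forall>e\<in>D. d e \<le> 0"
      by (simp add: not_less)
    moreover from this have "sum d D = 0"
      using d(2) by (meson antisym sum_nonpos)
    ultimately have "\<forall>e\<in>D. d e = 0"
      using sum_nonneg_eq_0_iff[OF assms(1), of "\<lambda>e. - d e"] by (simp add: sum_negf)
    with d(1) show False
      by blast
  qed
  with d show ?thesis
    using that by blast
qed

lemma eliminate_coefficient:
  assumes "finite D" "finite W" "G ` D \<subseteq> span W" "card W < card D"
    and "\<forall>e\<in>D. 0 \<le> c e"
  obtains c' where "\<forall>e\<in>D. 0 \<le> c' e" "sum c' D \<le> sum c D"
    "(\<Sum>e\<in>D. c' e *s G e) = (\<Sum>e\<in>D. c e *s G e)" "\<exists>e\<in>D. c' e = 0"
proof -
  obtain d where d: "\<exists>e\<in>D. 0 < d e" "0 \<le> sum d D" "(\<Sum>e\<in>D. d e *s G e) = 0"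
    using exists_relation_with_positive_entry[OF assms(1-4)] by blast
  obtain t where t: "0 \<le> t" "\<forall>e\<in>D. t * d e \<le> c e" "\<exists>e\<in>D. t * d e = c e"
    using exists_largest_feasible_step[OF assms(1) d(1) assms(5)] by blast
  show ?thesis
  proof
    show "\<forall>e\<in>D. 0 \<le> c e - t * d e"
      using t(2) by simp
    show "(\<Sum>e\<in>D. c e - t * d e) \<le> sum c D"
      using t(1) d(2) by (simp add: sum_subtractf sum_distrib_left[symmetric])
    have "(\<Sum>e\<in>D. (t * d e) *s G e) = t *s (\<Sum>e\<in>D. d e *s G e)"
      by (simp add: scale_sum_right)
    then show "(\<Sum>e\<in>D. (c e - t * d e) *s G e) = (\<Sum>e\<in>D. c e *s G e)"
      using d(3) by (simp add: scale_left_diff_distrib sum_subtractf)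
    show "\<exists>e\<in>D. c e - t * d e = 0"
      using t(3) by force
  qed
qed

lemma conic_caratheodory:
  assumes "finite D" "finite W" "G ` D \<subseteq> span W" "\<forall>e\<in>D. 0 \<le> c e"
  shows "\<exists>c'. (\<forall>e\<in>D. 0 \<le> c' e) \<and> sum c' D \<le> sum c D \<and>
    (\<Sum>e\<in>D. c' e *s G e) = (\<Sum>e\<in>D. c e *s G e) \<and> card {e\<in>D. c' e \<noteq> 0} \<le> card W"
  using assms(1,3,4)
proof (induction "card D" arbitrary: D c rule: less_induct)
  case less
  show ?case
  proof (cases "card D \<le> card W")
    case True
    then have "card {e\<in>D. c e \<noteq> 0} \<le> card W"
      using card_mono[OF less.prems(1), of "{e\<in>D. c e \<noteq> 0}"] by auto
    then show ?thesis
      using less.prems(3) by blast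
  next
    case False
    then obtain c1 where c1: "\<forall>e\<in>D. 0 \<le> c1 e" "sum c1 D \<le> sum c D"
      "(\<Sum>e\<in>D. c1 e *s G e) = (\<Sum>e\<in>D. c e *s G e)" "\<exists>e\<in>D. c1 e = 0"
      using eliminate_coefficient[OF less.prems(1) assms(2) less.prems(2) _ less.prems(3)] by force
    then obtain e0 where e0: "e0 \<in> D" "c1 e0 = 0"
      by blast
    let ?D = "D - {e0}"
    have remove: "sum f D = sum f ?D" if "f e0 = 0" for f :: "_ \<Rightarrow> 'r::comm_monoid_add"
      using sum.remove[OF less.prems(1) e0(1), of f] that by simp
    obtain c' where c': "\<forall>e\<in>?D. 0 \<le> c' e" "sum c' ?D \<le> sum c1 ?D"
        "(\<Sum>e\<in>?D. c' e *s G e) = (\<Sum>e\<in>?D. c1 e *s G e)" "card {e\<in>?D. c' e \<noteq> 0} \<le> card W"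
      using less.hyps[of ?D c1] less.prems(1,2) c1(1) card_Diff1_less[OF less.prems(1) e0(1)] by auto
    define c'' where "c'' e = (if e = e0 then 0 else c' e)" for e
    have "sum c'' D \<le> sum c1 D"
      using c'(2) remove[of c''] remove[of c1] e0 by (simp add: c''_def)
    then have "sum c'' D \<le> sum c D"
      using c1(2) by (rule order_trans)
    moreover have "(\<Sum>e\<in>D. c'' e *s G e) = (\<Sum>e\<in>D. c e *s G e)"
      using c'(3) c1(3) remove[of "\<lambda>e. c'' e *s G e"] remove[of "\<lambda>e. c1 e *s G e"] e0
      by (simp add: c''_def)
    moreover have "{e\<in>D. c'' e \<noteq> 0} = {e\<in>?D. c' e \<noteq> 0}"
      by (auto simp: c''_def)
    ultimately show ?thesis
      using c'(1,4) by (intro exI[of _ c'']) (auto simp: c''_def)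
  qed
qed

end

interpretation fun_real: linordered_vector_space "\<lambda>(r::real) (f::'a \<Rightarrow> real) k. r * f k"
  by unfold_locales (auto simp: fun_eq_iff algebra_simps)

lemma sum_fun_apply: "(\<Sum>e\<in>D. f e) k = (\<Sum>e\<in>D. f e k)"
  by (induction D rule: infinite_finite_induct) auto

lemma gen_in_span:
  assumes "i < n" "0 < a 0" "0 < b 0"
  shows "gen n a b i j \<in> fun_real.span {gen n a b i 0, gen n a b 0 j, gen n a b 0 0}"
proof -
  have "gen n a b i j = (\<lambda>k. real (b j) / real (b 0) * gen n a b i 0 k)
      + (\<lambda>k. real (a i) / real (a 0) * gen n a b 0 j k)
      - (\<lambda>k. real (a i) * real (b j) / (real (a 0) * real (b 0)) * gen n a b 0 0 k)"
    using assms by (auto simp: fun_eq_iff gen_def field_simps)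
  also have "\<dots> \<in> fun_real.span {gen n a b i 0, gen n a b 0 j, gen n a b 0 0}"
    by (intro fun_real.span_add fun_real.span_diff fun_real.span_scale fun_real.span_base) auto
  finally show ?thesis .
qed

lemma gens_subset_small_span:
  assumes "0 < n" "0 < m" "0 < a 0" "0 < b 0"
  obtains T where "finite T" "card T \<le> n + m - 1"
    "(\<lambda>(i, j). gen n a b i j) ` ({..<n} \<times> {..<m}) \<subseteq> fun_real.span T"
proof
  let ?T = "(\<lambda>i. gen n a b i 0) ` {..<n} \<union> (\<lambda>j. gen n a b 0 j) ` {1..<m}"
  show "finite ?T"
    by simp
  have "card ?T \<le> card {..<n} + card {1..<m}"
    by (intro order_trans[OF card_Un_le] add_mono card_image_le) auto
  then show "card ?T \<le> n + m - 1"
    using assms(2) by simp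
  have "gen n a b i j \<in> fun_real.span ?T" if "i < n" "j < m" for i j
  proof -
    have "{gen n a b i 0, gen n a b 0 j, gen n a b 0 0} \<subseteq> ?T"
      using assms that by (cases "j = 0") auto
    then show ?thesis
      using gen_in_span[of i n a b j] \<open>i < n\<close> assms(3,4) fun_real.span_mono by blast
  qed
  then show "(\<lambda>(i, j). gen n a b i j) ` ({..<n} \<times> {..<m}) \<subseteq> fun_real.span ?T"
    by auto
qed

lemma sparse_gen_combination:
  assumes a_pos: "\<forall>i<n. a i \<ge> 1" and b_pos: "\<forall>j<m. b j \<ge> 1"
    and c_nonneg: "\<forall>i<n. \<forall>j<m. 0 \<le> c i j"
  obtains c' where "\<forall>i<n. \<forall>j<m. 0 \<le> c' i j" "(\<Sum>i<n. \<Sum>j<m. c' i j) \<le> (\<Sum>i<n. \<Sum>j<m. c i j)"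
    "\<And>k. (\<Sum>i<n. \<Sum>j<m. c' i j * gen n a b i j k) = (\<Sum>i<n. \<Sum>j<m. c i j * gen n a b i j k)"
    "card {(i, j). i < n \<and> j < m \<and> c' i j \<noteq> 0} \<le> m + n - 1"
proof (cases "n = 0 \<or> m = 0")
  case True
  then have "card {(i, j). i < n \<and> j < m \<and> c i j \<noteq> 0} = 0"
    by auto
  with c_nonneg show ?thesis
    by (intro that[of c]) auto
next
  case False
  then have "0 < n" "0 < m" "0 < a 0" "0 < b 0"
    using a_pos b_pos by auto
  let ?D = "{..<n} \<times> {..<m}"
  let ?G = "\<lambda>(i, j). gen n a b i j"
  have double_sum: "sum f ?D = (\<Sum>i<n. \<Sum>j<m. f (i, j))" for f :: "nat \<times> nat \<Rightarrow> real"
    by (simp add: sum.cartesian_product)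
  obtain T where T: "finite T" "card T \<le> n + m - 1" "?G ` ?D \<subseteq> fun_real.span T"
    using gens_subset_small_span[of n m a b] \<open>0 < n\<close> \<open>0 < m\<close> \<open>0 < a 0\<close> \<open>0 < b 0\<close> by blast
  obtain c' where c': "\<forall>e\<in>?D. 0 \<le> c' e" "sum c' ?D \<le> sum (case_prod c) ?D"
    "(\<Sum>e\<in>?D. (\<lambda>k. c' e * ?G e k)) = (\<Sum>e\<in>?D. (\<lambda>k. case_prod c e * ?G e k))"
    "card {e\<in>?D. c' e \<noteq> 0} \<le> card T"
    using fun_real.conic_caratheodory[OF _ T(1,3), of "case_prod c"] c_nonneg by auto
  show ?thesis
  proof
    show "\<forall>i<n. \<forall>j<m. 0 \<le> c' (i, j)"
      using c'(1) by auto
    show "(\<Sum>i<n. \<Sum>j<m. c' (i, j)) \<le> (\<Sum>i<n. \<Sum>j<m. c i j)"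
      using c'(2) by (simp add: double_sum)
    show "(\<Sum>i<n. \<Sum>j<m. c' (i, j) * gen n a b i j k) = (\<Sum>i<n. \<Sum>j<m. c i j * gen n a b i j k)" for k
      using fun_cong[OF c'(3), of k] by (simp add: sum_fun_apply double_sum)
    have "{(i, j). i < n \<and> j < m \<and> c' (i, j) \<noteq> 0} = {e\<in>?D. c' e \<noteq> 0}"
      by auto
    then show "card {(i, j). i < n \<and> j < m \<and> c' (i, j) \<noteq> 0} \<le> m + n - 1"
      using c'(4) T(2) by simp
  qed
qed

lemma vec_of_eq_sum_scaled_gen:
  assumes sol: "is_solution n m a b x y" and pos: "0 < (\<Sum>i<n. x i * a i)" and k: "k < n + m"
  shows "vec_of n x y k
    = (\<Sum>i<n. \<Sum>j<m. real (x i) * real (y j) / real (\<Sum>i<n. x i * a i) * gen n a b i j k)"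
proof -
  define S where "S = real (\<Sum>i<n. x i * a i)"
  have "0 < S"
    using pos unfolding S_def by (simp only: of_nat_0_less_iff)
  have S_x: "S = (\<Sum>i<n. real (x i) * real (a i))"
    by (simp add: S_def)
  have S_y: "S = (\<Sum>j<m. real (y j) * real (b j))"
    using sol unfolding is_solution_def S_def by simp
  show ?thesis
  proof (cases "k < n")
    case True
    have "(\<Sum>i<n. \<Sum>j<m. real (x i) * real (y j) / S * gen n a b i j k)
        = (\<Sum>i<n. if i = k then (\<Sum>j<m. real (x k) * real (y j) / S * real (b j)) else 0)"
      using True by (intro sum.cong refl) (auto simp: gen_def)
    also have "\<dots> = real (x k) * (\<Sum>j<m. real (y j) * real (b j)) / S"
      using True by (simp add: sum_distrib_left sum_divide_distrib algebra_simps)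
    also have "\<dots> = vec_of n x y k"
      using True S_y \<open>0 < S\<close> by (simp add: vec_of_def)
    finally show ?thesis
      unfolding S_def by simp
  next
    case False
    define j where "j = k - n"
    have j: "k = n + j" "j < m"
      using False k unfolding j_def by auto
    have "(\<Sum>i<n. \<Sum>j'<m. real (x i) * real (y j') / S * gen n a b i j' k)
        = (\<Sum>i<n. real (x i) * real (y j) / S * real (a i))"
      using j by (intro sum.cong refl) (auto simp: gen_def if_distrib sum.delta' cong: if_cong)
    also have "\<dots> = real (y j) * (\<Sum>i<n. real (x i) * real (a i)) / S"
      by (simp add: sum_distrib_left sum_divide_distrib algebra_simps)
    also have "\<dots> = vec_of n x y k"
      using j S_x \<open>0 < S\<close> by (simp add: vec_of_def)
    finally show ?thesis
      unfolding S_def by simp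
  qed
qed

lemma nonzero_solution_weight_pos:
  assumes a_pos: "\<forall>i<n. a i \<ge> 1" and b_pos: "\<forall>j<m. b j \<ge> 1"
    and sol: "is_solution n m a b x y" and nonzero: "nonzero_sol n m x y"
  shows "0 < (\<Sum>i<n. x i * a i)"
proof -
  from nonzero consider (x) i where "i < n" "x i \<noteq> 0" | (y) j where "j < m" "y j \<noteq> 0"
    unfolding nonzero_sol_def by blast
  then show ?thesis
  proof cases
    case x
    moreover have "a i \<ge> 1"
      using a_pos x(1) by simp
    ultimately have "0 < x i * a i"
      by simp
    with x(1) show ?thesis
      by (intro sum_pos2[of "{..<n}" i]) auto
  next
    case y
    moreover have "b j \<ge> 1"
      using b_pos y(1) by simp
    ultimately have "0 < y j * b j"
      by simp
    with y(1) have "0 < (\<Sum>j<m. y j * b j)"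
      by (intro sum_pos2[of "{..<m}" j]) auto
    with sol show ?thesis
      unfolding is_solution_def by simp
  qed
qed

lemma minimal_solution_gen_combination:
  assumes "\<forall>i<n. a i \<ge> 1" "\<forall>j<m. b j \<ge> 1" and min: "minimal_solution n m a b x y"
  obtains c where "\<forall>i<n. \<forall>j<m. 0 \<le> c i j" "(\<Sum>i<n. \<Sum>j<m. c i j) \<le> 1"
    "\<And>k. k < n + m \<Longrightarrow> vec_of n x y k = (\<Sum>i<n. \<Sum>j<m. c i j * gen n a b i j k)"
proof
  have sol: "is_solution n m a b x y"
    using min unfolding minimal_solution_def by simp
  define S where "S = (\<Sum>i<n. x i * a i)"
  have "0 < S"
    using nonzero_solution_weight_pos[OF assms(1,2) sol] min unfolding S_def minimal_solution_def by simp
  define c where "c i j = real (x i) * real (y j) / real S" for i j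
  show "\<forall>i<n. \<forall>j<m. 0 \<le> c i j"
    by (simp add: c_def)
  have "(\<Sum>i<n. \<Sum>j<m. c i j) = real ((\<Sum>i<n. x i) * (\<Sum>j<m. y j)) / real S"
    by (simp add: c_def sum_divide_distrib[symmetric] sum_product)
  also have "\<dots> \<le> 1"
  proof -
    have "(\<Sum>i<n. x i) * (\<Sum>j<m. y j) \<le> S"
      using minimal_solution_sum_mult_sum_le[OF assms] unfolding S_def .
    with \<open>0 < S\<close> show ?thesis
      by (metis divide_le_eq_1_pos of_nat_0_less_iff of_nat_le_iff)
  qed
  finally show "(\<Sum>i<n. \<Sum>j<m. c i j) \<le> 1" .
  show "vec_of n x y k = (\<Sum>i<n. \<Sum>j<m. c i j * gen n a b i j k)" if "k < n + m" for k
    using vec_of_eq_sum_scaled_gen[OF sol _ that] \<open>0 < S\<close> unfolding c_def S_def by simp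
qed

theorem corollary2:
  fixes n m :: nat and a b x y :: "nat \<Rightarrow> nat"
  assumes "\<forall>i<n. a i \<ge> 1" and "\<forall>j<m. b j \<ge> 1"
    and "minimal_solution n m a b x y"
  shows "\<exists>(c0::real) (c :: nat \<Rightarrow> nat \<Rightarrow> real).
     c0 \<ge> 0 \<and> (\<forall>i<n. \<forall>j<m. c i j \<ge> 0) \<and>
     c0 + (\<Sum>i<n. \<Sum>j<m. c i j) = 1 \<and>
     (\<forall>k<n + m. vec_of n x y k = c0 * 0 + (\<Sum>i<n. \<Sum>j<m. c i j * gen n a b i j k)) \<and>
     card {(i, j). i < n \<and> j < m \<and> c i j \<noteq> 0} \<le> m + n - 1"
proof -
  obtain c where c: "\<forall>i<n. \<forall>j<m. 0 \<le> c i j" "(\<Sum>i<n. \<Sum>j<m. c i j) \<le> 1"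
    "\<And>k. k < n + m \<Longrightarrow> vec_of n x y k = (\<Sum>i<n. \<Sum>j<m. c i j * gen n a b i j k)"
    using minimal_solution_gen_combination[OF assms] by blast
  obtain c' where c': "\<forall>i<n. \<forall>j<m. 0 \<le> c' i j" "(\<Sum>i<n. \<Sum>j<m. c' i j) \<le> (\<Sum>i<n. \<Sum>j<m. c i j)"
    "\<And>k. (\<Sum>i<n. \<Sum>j<m. c' i j * gen n a b i j k) = (\<Sum>i<n. \<Sum>j<m. c i j * gen n a b i j k)"
    "card {(i, j). i < n \<and> j < m \<and> c' i j \<noteq> 0} \<le> m + n - 1"
    using sparse_gen_combination[OF assms(1,2) c(1)] by blast
  show ?thesis
    using c c'
    by (intro exI[of _ "1 - (\<Sum>i<n. \<Sum>j<m. c' i j)"] exI[of _ c']) simp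
qed

end
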